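(* Let $G$ be a group and $\mathrm{Pr}(G)$ its predicatization in the language $\mathcal{L}_{g\text{-}pred}=\{M^{(3)},I^{(2)},E^{(1)}\}$. Then every direct power $\Pi\mathrm{Pr}(G)=\prod_{i\in I}\mathrm{Pr}(G)$ is $\mathcal{L}_{g\text{-}pred}(\Pi G)$-equationally Noetherian.
   Context: The predicatization $\mathrm{Pr}(G)$ is the structure with universe $G$ where $M(x,y,z)\Leftrightarrow xy=z$, $I(x,y)\Leftrightarrow x=y^{-1}$, $E(x)\Leftrightarrow x=1$. The direct power consists of all sequences $[g_i\mid i\in I]$, with each relation holding coordinatewise. $\mathcal{L}_{g\text{-}pred}(\Pi G)$ is the language extended by a constant symbol for every element of the direct power. An equation is an atomic formula of this language (a relation symbol applied to variables/constants, or an equality of two variables/constants); a system is any set of equations in a fixed finite set of variables; two systems are equivalent if they have the same solution set. A structure is $\mathcal{L}_{g\text{-}pred}(\Pi G)$-equationally Noetherian if every system is equivalent over it to a finite subsystem. *)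

theory Defs
  imports "HOL-Algebra.Group" "HOL-Library.FuncSet"
begin

text \<open>Terms of the language L_g-pred(Pi G): variables from 'v, or constants
  naming elements of the direct power (functions 'i => 'a).\<close>
datatype ('v, 'c) gterm = Var 'v | Cst 'c

datatype ('v, 'c) gatom =
    AM "('v, 'c) gterm" "('v, 'c) gterm" "('v, 'c) gterm"
  | AI "('v, 'c) gterm" "('v, 'c) gterm"
  | AE "('v, 'c) gterm"
  | AEq "('v, 'c) gterm" "('v, 'c) gterm"

definition dpower :: "('a, 'b) monoid_scheme \<Rightarrow> 'i set \<Rightarrow> ('i \<Rightarrow> 'a) set" where
  "dpower G I = PiE I (\<lambda>_. carrier G)"

fun gt_consts :: "('v, 'c) gterm \<Rightarrow> 'c set" where
  "gt_consts (Var x) = {}"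
| "gt_consts (Cst c) = {c}"

fun ga_consts :: "('v, 'c) gatom \<Rightarrow> 'c set" where
  "ga_consts (AM a b c) = gt_consts a \<union> gt_consts b \<union> gt_consts c"
| "ga_consts (AI a b) = gt_consts a \<union> gt_consts b"
| "ga_consts (AE a) = gt_consts a"
| "ga_consts (AEq a b) = gt_consts a \<union> gt_consts b"

definition is_equation :: "('a, 'b) monoid_scheme \<Rightarrow> 'i set \<Rightarrow> ('v, 'i \<Rightarrow> 'a) gatom \<Rightarrow> bool" where
  "is_equation G I e \<longleftrightarrow> ga_consts e \<subseteq> dpower G I"

fun gt_eval :: "('v \<Rightarrow> 'c) \<Rightarrow> ('v, 'c) gterm \<Rightarrow> 'c" where
  "gt_eval s (Var x) = s x"
| "gt_eval s (Cst c) = c"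

fun ga_holds :: "('a, 'b) monoid_scheme \<Rightarrow> 'i set \<Rightarrow> ('v \<Rightarrow> 'i \<Rightarrow> 'a) \<Rightarrow> ('v, 'i \<Rightarrow> 'a) gatom \<Rightarrow> bool" where
  "ga_holds G I s (AM a b c) =
     (\<forall>i\<in>I. gt_eval s a i \<otimes>\<^bsub>G\<^esub> gt_eval s b i = gt_eval s c i)"
| "ga_holds G I s (AI a b) = (\<forall>i\<in>I. gt_eval s a i = inv\<^bsub>G\<^esub> (gt_eval s b i))"
| "ga_holds G I s (AE a) = (\<forall>i\<in>I. gt_eval s a i = \<one>\<^bsub>G\<^esub>)"
| "ga_holds G I s (AEq a b) = (gt_eval s a = gt_eval s b)"

definition solset :: "('a, 'b) monoid_scheme \<Rightarrow> 'i set \<Rightarrow> ('v, 'i \<Rightarrow> 'a) gatom set \<Rightarrow> ('v \<Rightarrow> 'i \<Rightarrow> 'a) set" where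
  "solset G I S = {s. (\<forall>x. s x \<in> dpower G I) \<and> (\<forall>e\<in>S. ga_holds G I s e)}"

definition eq_noetherian :: "('a, 'b) monoid_scheme \<Rightarrow> 'i set \<Rightarrow> 'v itself \<Rightarrow> bool" where
  "eq_noetherian G I (_ :: 'v itself) \<longleftrightarrow>
     (\<forall>S :: ('v, 'i \<Rightarrow> 'a) gatom set. (\<forall>e\<in>S. is_equation G I e) \<longrightarrow>
        (\<exists>S0\<subseteq>S. finite S0 \<and> solset G I S0 = solset G I S))"

end

theory Submission
  imports Defs
begin

(* An equation is a relation symbol (M, I, E or equality) applied to at most three terms; its shape
   records the symbol and the variables, with the constants erased. In each of these relations of
   the direct power every entry of a tuple is determined by the others. As the arity is at most 3,
   for two equations of the same shape either at most one position holds a variable or at most one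
   holds a constant, and in both cases a common solution forces them to have the same solutions.
   Finitely many variables give finitely many shapes, so a system is equivalent to one
   representative per shape, unless two of its equations of the same shape have no common
   solution at all. *)

definition determined_by_other_entries :: "'a list set \<Rightarrow> bool" where
  "determined_by_other_entries R \<longleftrightarrow> (\<forall>u\<in>R. \<forall>j x. u[j := x] \<in> R \<longrightarrow> u[j := x] = u)"

lemma determined_by_other_entriesD:
  assumes "determined_by_other_entries R" "u \<in> R" "w \<in> R" "length w = length u"
    and "\<forall>k<length u. k \<noteq> j \<longrightarrow> u ! k = w ! k"
  shows "w = u"
proof -
  have "w = u[j := w ! j]"
    using assms(4,5) by (cases "j < length u") (auto intro!: nth_equalityI simp: nth_list_update)
  with assms(1-3) show ?thesis
    unfolding determined_by_other_entries_def by metis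
qed

lemma all_but_one_of_three:
  fixes n :: nat
  assumes "n \<le> 3" "\<forall>k<n. P k \<or> Q k"
  shows "\<exists>j. (\<forall>k<n. k \<noteq> j \<longrightarrow> P k) \<or> (\<forall>k<n. k \<noteq> j \<longrightarrow> Q k)"
proof -
  have "\<forall>k<n. k = 0 \<or> k = 1 \<or> k = 2" using assms(1) by auto
  then show ?thesis using assms(2) by metis
qed

(* u, u' are the values of two equations of the same shape under a common solution and w, w' their
   values under another assignment: variable positions give the first alternative of entries,
   constant positions the second. *)
lemma determined_by_other_entries_transfer:
  assumes R: "determined_by_other_entries R" and "u \<in> R" "u' \<in> R" "w \<in> R"
    and len: "length u \<le> 3" "length u' = length u" "length w = length u" "length w' = length u"
    and entries: "\<forall>k<length u. (u ! k = u' ! k \<and> w ! k = w' ! k) \<or> (u ! k = w ! k \<and> u' ! k = w' ! k)"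
  shows "w' \<in> R"
proof -
  obtain j where
    "(\<forall>k<length u. k \<noteq> j \<longrightarrow> u ! k = u' ! k \<and> w ! k = w' ! k) \<or>
     (\<forall>k<length u. k \<noteq> j \<longrightarrow> u ! k = w ! k \<and> u' ! k = w' ! k)"
    using all_but_one_of_three[OF len(1) entries] by blast
  then show ?thesis
  proof
    assume "\<forall>k<length u. k \<noteq> j \<longrightarrow> u ! k = u' ! k \<and> w ! k = w' ! k"
    then have "u' = u"
      using determined_by_other_entriesD[OF R \<open>u \<in> R\<close> \<open>u' \<in> R\<close>] len by auto
    then have "w' = w"
      using entries len by (metis nth_equalityI)
    with \<open>w \<in> R\<close> show ?thesis by simp
  next
    assume "\<forall>k<length u. k \<noteq> j \<longrightarrow> u ! k = w ! k \<and> u' ! k = w' ! k"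
    then have "w = u"
      using determined_by_other_entriesD[OF R \<open>u \<in> R\<close> \<open>w \<in> R\<close>] len by auto
    then have "w' = u'"
      using entries len by (metis nth_equalityI)
    with \<open>u' \<in> R\<close> show ?thesis by simp
  qed
qed

datatype gsym = RelM | RelI | RelE | RelEq

instance gsym :: finite
proof
  have "(UNIV :: gsym set) = {RelM, RelI, RelE, RelEq}"
    using gsym.exhaust by blast
  then show "finite (UNIV :: gsym set)" by (metis finite.emptyI finite_insert)
qed

fun symbol :: "('v, 'c) gatom \<Rightarrow> gsym" where
  "symbol (AM a b c) = RelM"
| "symbol (AI a b) = RelI"
| "symbol (AE a) = RelE"
| "symbol (AEq a b) = RelEq"

fun args :: "('v, 'c) gatom \<Rightarrow> ('v, 'c) gterm list" where
  "args (AM a b c) = [a, b, c]"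
| "args (AI a b) = [a, b]"
| "args (AE a) = [a]"
| "args (AEq a b) = [a, b]"

lemma length_args_le_3: "length (args e) \<le> 3"
  by (cases e) simp_all

fun point_rel :: "('a, 'b) monoid_scheme \<Rightarrow> gsym \<Rightarrow> 'a list set" where
  "point_rel G RelM = {[x, y, x \<otimes>\<^bsub>G\<^esub> y] | x y. x \<in> carrier G \<and> y \<in> carrier G}"
| "point_rel G RelI = {[inv\<^bsub>G\<^esub> y, y] | y. y \<in> carrier G}"
| "point_rel G RelE = {[\<one>\<^bsub>G\<^esub>]}"
| "point_rel G RelEq = {[x, x] | x. x \<in> carrier G}"

lemma (in group) determined_point_rel: "determined_by_other_entries (point_rel G \<sigma>)"
  by (cases \<sigma>)
    (auto simp: determined_by_other_entries_def dest: inj_onD[OF inv_inj] split: nat.splits)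

definition direct_power_rel :: "'i set \<Rightarrow> 'a list set \<Rightarrow> ('i \<Rightarrow> 'a) list set" where
  "direct_power_rel I r = {fs \<in> lists (extensional I). \<forall>i\<in>I. map (\<lambda>f. f i) fs \<in> r}"

lemma determined_direct_power_rel:
  assumes r: "determined_by_other_entries r"
  shows "determined_by_other_entries (direct_power_rel I r)"
  unfolding determined_by_other_entries_def
proof (intro ballI allI impI)
  fix fs j g
  assume fs: "fs \<in> direct_power_rel I r" and upd: "fs[j := g] \<in> direct_power_rel I r"
  show "fs[j := g] = fs"
  proof (cases "j < length fs")
    case True
    have "g i = (fs ! j) i" if "i \<in> I" for i
    proof -
      have "(map (\<lambda>f. f i) fs)[j := g i] = map (\<lambda>f. f i) fs"
        using r fs upd that unfolding determined_by_other_entries_def direct_power_rel_def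
        by (metis (mono_tags, lifting) map_update mem_Collect_eq)
      then show ?thesis
        using True by (metis length_map list_update_same_conv nth_map)
    qed
    moreover have "g \<in> extensional I" "fs ! j \<in> extensional I"
      using upd fs True by (auto simp: direct_power_rel_def set_update_memI dest: nth_mem)
    ultimately show ?thesis
      using True by (metis extensionalityI list_update_id)
  qed (simp add: list_update_beyond)
qed

lemma gt_eval_in_dpower:
  "gt_consts a \<subseteq> dpower G I \<Longrightarrow> \<forall>x. s x \<in> dpower G I \<Longrightarrow> gt_eval s a \<in> dpower G I"
  by (cases a) auto

lemma ga_holds_iff_direct_power_rel:
  assumes "is_equation G I e" "\<forall>x. s x \<in> dpower G I"
  shows "ga_holds G I s e \<longleftrightarrow> map (gt_eval s) (args e) \<in> direct_power_rel I (point_rel G (symbol e))"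
proof -
  have "\<forall>a\<in>set (args e). gt_eval s a \<in> dpower G I"
    using assms by (cases e) (auto simp: is_equation_def intro: gt_eval_in_dpower)
  then show ?thesis
    by (cases e) (auto simp: direct_power_rel_def dpower_def PiE_def Pi_def intro: extensionalityI)
qed

fun gt_var :: "('v, 'c) gterm \<Rightarrow> 'v option" where
  "gt_var (Var x) = Some x"
| "gt_var (Cst c) = None"

definition shape :: "('v, 'c) gatom \<Rightarrow> gsym \<times> 'v option list" where
  "shape e = (symbol e, map gt_var (args e))"

lemma finite_range_shape: "finite (range (shape :: ('v::finite, 'c) gatom \<Rightarrow> _))"
proof (rule finite_subset)
  show "range shape \<subseteq> (UNIV :: gsym set) \<times> {xs :: 'v option list. set xs \<subseteq> UNIV \<and> length xs \<le> 3}"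
    using length_args_le_3 by (auto simp: shape_def)
  show "finite ((UNIV :: gsym set) \<times> {xs :: 'v option list. set xs \<subseteq> UNIV \<and> length xs \<le> 3})"
    by (intro finite_cartesian_product finite_lists_length_le) simp_all
qed

lemma gt_eval_same_var:
  assumes "gt_var a = gt_var b"
  shows "(gt_eval s a = gt_eval s b \<and> gt_eval t a = gt_eval t b) \<or>
    (gt_eval s a = gt_eval t a \<and> gt_eval s b = gt_eval t b)"
  using assms by (cases a; cases b) simp_all

lemma ga_holds_transfer_same_shape:
  assumes "group G" and eqs: "is_equation G I e" "is_equation G I e'" and "shape e = shape e'"
    and s: "\<forall>x. s x \<in> dpower G I" "ga_holds G I s e" "ga_holds G I s e'"
    and t: "\<forall>x. t x \<in> dpower G I" "ga_holds G I t e"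
  shows "ga_holds G I t e'"
proof -
  have sym: "symbol e' = symbol e" and vars: "map gt_var (args e') = map gt_var (args e)"
    using \<open>shape e = shape e'\<close> by (simp_all add: shape_def)
  then have len: "length (args e') = length (args e)"
    by (metis length_map)
  let ?R = "direct_power_rel I (point_rel G (symbol e))"
  let ?u = "map (gt_eval s) (args e)" and ?u' = "map (gt_eval s) (args e')"
  let ?w = "map (gt_eval t) (args e)" and ?w' = "map (gt_eval t) (args e')"
  have "?w' \<in> ?R"
  proof (rule determined_by_other_entries_transfer)
    show "determined_by_other_entries ?R"
      using \<open>group G\<close> by (intro determined_direct_power_rel group.determined_point_rel)
    show "?u \<in> ?R" "?u' \<in> ?R" "?w \<in> ?R"
      using s t eqs sym ga_holds_iff_direct_power_rel by metis+
    show "\<forall>k<length ?u. (?u ! k = ?u' ! k \<and> ?w ! k = ?w' ! k) \<or> (?u ! k = ?w ! k \<and> ?u' ! k = ?w' ! k)"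
      using vars len by (auto intro!: gt_eval_same_var) (metis nth_map)
  qed (use len length_args_le_3 in simp_all)
  then show ?thesis
    using t eqs sym ga_holds_iff_direct_power_rel by metis
qed

lemma finite_subsystem_by_shapes:
  fixes S :: "'e set" and shape :: "'e \<Rightarrow> 'k" and sol :: "'e \<Rightarrow> 's set"
  assumes "finite (shape ` S)"
    and compatible: "\<And>e e'. e \<in> S \<Longrightarrow> e' \<in> S \<Longrightarrow> shape e = shape e' \<Longrightarrow>
      U \<inter> sol e \<inter> sol e' \<noteq> {} \<Longrightarrow> U \<inter> sol e \<subseteq> sol e'"
  shows "\<exists>S0\<subseteq>S. finite S0 \<and> U \<inter> \<Inter>(sol ` S0) = U \<inter> \<Inter>(sol ` S)"
proof (cases "\<exists>e\<in>S. \<exists>e'\<in>S. shape e = shape e' \<and> U \<inter> sol e \<inter> sol e' = {}")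
  case True
  then obtain e e' where "e \<in> S" "e' \<in> S" "U \<inter> sol e \<inter> sol e' = {}" by blast
  then show ?thesis
    by (intro exI[of _ "{e, e'}"]) blast
next
  case False
  define rep where "rep k = (SOME e. e \<in> S \<and> shape e = k)" for k
  have rep: "rep k \<in> S \<and> shape (rep k) = k" if "k \<in> shape ` S" for k
    using that unfolding rep_def by (metis (mono_tags, lifting) imageE someI_ex)
  define S0 where "S0 = rep ` shape ` S"
  have "S0 \<subseteq> S"
    using rep by (auto simp: S0_def)
  moreover have "finite S0"
    using \<open>finite (shape ` S)\<close> by (simp add: S0_def)
  moreover have "U \<inter> \<Inter>(sol ` S0) \<subseteq> sol e" if "e \<in> S" for e
  proof -
    have "rep (shape e) \<in> S0"
      using that by (simp add: S0_def)
    moreover have "U \<inter> sol (rep (shape e)) \<subseteq> sol e"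
      using compatible[of "rep (shape e)" e] False rep[of "shape e"] that by blast
    ultimately show ?thesis
      by blast
  qed
  ultimately show ?thesis
    by blast
qed

lemma solset_eq_Inter:
  "solset G I S = {s. \<forall>x. s x \<in> dpower G I} \<inter> \<Inter>((\<lambda>e. {s. ga_holds G I s e}) ` S)"
  by (auto simp: solset_def)

theorem corollary1:
  fixes G :: "('a, 'b) monoid_scheme" and I :: "'i set"
  assumes "group G"
  shows "eq_noetherian G I TYPE('v::finite)"
  unfolding eq_noetherian_def solset_eq_Inter
proof (intro allI impI finite_subsystem_by_shapes)
  fix S :: "('v, 'i \<Rightarrow> 'a) gatom set" and e e'
  show "finite (shape ` S)"
    by (rule finite_subset[OF _ finite_range_shape]) blast
  assume "\<forall>e\<in>S. is_equation G I e" "e \<in> S" "e' \<in> S" "shape e = shape e'"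
    and "{s. \<forall>x. s x \<in> dpower G I} \<inter> {s. ga_holds G I s e} \<inter> {s. ga_holds G I s e'} \<noteq> {}"
  then show "{s. \<forall>x. s x \<in> dpower G I} \<inter> {s. ga_holds G I s e} \<subseteq> {s. ga_holds G I s e'}"
    using ga_holds_transfer_same_shape[OF \<open>group G\<close>] by blast
qed

end
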